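(* Let $n\ge 2$ and run Protocol 1 on $n$ nodes, one of which is initially in state $L_0$ and the remaining $n-1$ in state $F$. Then Protocol 1 stably constructs the graph language $\mathscr{T}=\{G : G \text{ is a tree rooted at the leader and every node } u \text{ has } \Delta^+(u)\le 2\}$, where $\Delta^+(u)$ is the number of children of $u$; moreover, under the uniform random scheduler, the execution stabilises to a spanning tree in $\mathscr{T}$ within $O(\log n)$ parallel time with high probability.
   Context: Network constructor model: there are $n$ nodes and every pair of nodes may interact. Each node has a state from a finite set $Q$; each of the $n(n-1)/2$ node pairs carries an edge state in $\{0,1\}$ (inactive/active), all initially $0$. At each discrete step the uniform random scheduler picks an unordered pair $\{u,v\}$ uniformly at random among all $n(n-1)/2$ pairs, independently of the past, and the two nodes and their edge are updated by the transition function $\delta:(a,b,c)\mapsto(a',b',c')$ (applicable with either ordering of the pair); any triple not listed as a rule is left unchanged. All states are output states, so the output graph of a configuration is the graph on all nodes whose edges are the active edges. An execution stabilises to a graph $G$ if from some step on the output graph is always (isomorphic to) $G$; the running time is the first such step, and parallel time is the number of steps divided by $n$. A protocol stably constructs a graph language $\mathscr{G}$ if every fair execution stabilises to a graph in $\mathscr{G}$ and every graph $G\in\mathscr{G}$ is the stabilised output of some execution on $|V(G)|$ nodes (an infinite execution is fair if whenever a configuration $C$ occurs infinitely often, every configuration reachable from $C$ in one step occurs infinitely often). "With high probability" means with probability at least $1-n^{-a}$ for an arbitrarily chosen constant $a>0$ (the time bound's constant depending on $a$). Protocol 1 (2-Slot protocol): $Q=\{F,L_0,L_1,L_2,O_0,O_1,O_2\}$,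 rules $(L_0,F,0)\to(L_1,O_0,1)$, $(L_1,F,0)\to(L_2,O_0,1)$, $(O_0,F,0)\to(O_1,O_0,1)$, $(O_1,F,0)\to(O_2,O_0,1)$. When such a rule fires, the node that moves from $F$ to $O_0$ becomes a child of the other node; the leader (initially $L_0$) is the root. *)

theory Defs
  imports "HOL-Probability.Probability"
begin

datatype st = F | L0 | L1 | L2 | O0 | O1 | O2

fun delta :: "st \<Rightarrow> st \<Rightarrow> bool \<Rightarrow> (st \<times> st \<times> bool) option" where
  "delta L0 F False = Some (L1, O0, True)"
| "delta L1 F False = Some (L2, O0, True)"
| "delta O0 F False = Some (O1, O0, True)"
| "delta O1 F False = Some (O2, O0, True)"
| "delta _ _ _ = None"

text \<open>Configuration: node states and the set of active edges (unordered pairs {u,v}).\<close>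
type_synonym config = "(nat \<Rightarrow> st) \<times> nat set set"

definition apply_rule :: "nat \<Rightarrow> nat \<Rightarrow> st \<times> st \<times> bool \<Rightarrow> config \<Rightarrow> config" where
  "apply_rule u v r c = (case r of (a, b, e) \<Rightarrow>
     ((fst c)(u := a, v := b), if e then insert {u, v} (snd c) else snd c - {{u, v}}))"

definition interact :: "nat \<Rightarrow> nat \<Rightarrow> config \<Rightarrow> config" where
  "interact u v c =
     (case delta (fst c u) (fst c v) ({u, v} \<in> snd c) of
        Some r \<Rightarrow> apply_rule u v r c
      | None \<Rightarrow> (case delta (fst c v) (fst c u) ({u, v} \<in> snd c) of
                   Some r \<Rightarrow> apply_rule v u r c
                 | None \<Rightarrow> c))"

definition init :: "nat \<Rightarrow> config" where
  "init l = ((\<lambda>i. if i = l then L0 else F), {})"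

definition step :: "nat \<Rightarrow> config \<Rightarrow> config \<Rightarrow> bool" where
  "step n c c' \<longleftrightarrow> (\<exists>u v. u < n \<and> v < n \<and> u \<noteq> v \<and> c' = interact u v c)"

definition execution :: "nat \<Rightarrow> nat \<Rightarrow> (nat \<Rightarrow> config) \<Rightarrow> bool" where
  "execution n l C \<longleftrightarrow> C 0 = init l \<and> (\<forall>t. step n (C t) (C (Suc t)))"

definition fair :: "nat \<Rightarrow> (nat \<Rightarrow> config) \<Rightarrow> bool" where
  "fair n C \<longleftrightarrow> (\<forall>c. infinite {t. C t = c} \<longrightarrow>
                    (\<forall>c'. step n c c' \<longrightarrow> infinite {t. C t = c'}))"

definition pairs :: "nat \<Rightarrow> nat set set" where
  "pairs n = {{u, v} | u v. u < n \<and> v < n \<and> u \<noteq> v}"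

definition adj :: "nat set set \<Rightarrow> nat \<Rightarrow> nat \<Rightarrow> bool" where
  "adj G u v \<longleftrightarrow> u \<noteq> v \<and> {u, v} \<in> G"

definition iso :: "nat \<Rightarrow> nat set set \<Rightarrow> nat set set \<Rightarrow> bool" where
  "iso n G H \<longleftrightarrow> (\<exists>f. bij_betw f {0..<n} {0..<n} \<and>
       (\<forall>u<n. \<forall>v<n. adj G u v \<longleftrightarrow> adj H (f u) (f v)))"

definition connected_graph :: "nat \<Rightarrow> nat set set \<Rightarrow> bool" where
  "connected_graph n G \<longleftrightarrow>
     (\<forall>u<n. \<forall>v<n. (\<lambda>a b. a < n \<and> b < n \<and> adj G a b)\<^sup>*\<^sup>* u v)"

definition has_cycle :: "nat \<Rightarrow> nat set set \<Rightarrow> bool" where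
  "has_cycle n G \<longleftrightarrow> (\<exists>cs. 3 \<le> length cs \<and> distinct cs \<and> set cs \<subseteq> {0..<n} \<and>
       (\<forall>i < length cs. adj G (cs ! i) (cs ! ((i + 1) mod length cs))))"

definition is_tree :: "nat \<Rightarrow> nat set set \<Rightarrow> bool" where
  "is_tree n G \<longleftrightarrow> G \<subseteq> pairs n \<and> connected_graph n G \<and> \<not> has_cycle n G"

text \<open>In a tree rooted at r, v is a child of u iff u,v are adjacent, v is not the root,
  and u is reachable from r without passing through v (i.e. u lies on the r-v path).\<close>
definition child :: "nat \<Rightarrow> nat set set \<Rightarrow> nat \<Rightarrow> nat \<Rightarrow> nat \<Rightarrow> bool" where
  "child n G r u v \<longleftrightarrow> adj G u v \<and> v \<noteq> r \<and>
     (\<lambda>a b. a < n \<and> b < n \<and> a \<noteq> v \<and> b \<noteq> v \<and> adj G a b)\<^sup>*\<^sup>* r u"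

definition treeT :: "nat \<Rightarrow> nat set set \<Rightarrow> bool" where
  "treeT n G \<longleftrightarrow> is_tree n G \<and>
     (\<exists>r<n. \<forall>u<n. card {v. v < n \<and> child n G r u v} \<le> 2)"

definition stabilises :: "nat \<Rightarrow> (nat \<Rightarrow> config) \<Rightarrow> nat set set \<Rightarrow> bool" where
  "stabilises n C G \<longleftrightarrow> (\<exists>t0. \<forall>t\<ge>t0. iso n (snd (C t)) G)"

definition stably_constructs :: "nat \<Rightarrow> nat \<Rightarrow> (nat set set \<Rightarrow> bool) \<Rightarrow> bool" where
  "stably_constructs n l L \<longleftrightarrow>
     (\<forall>C. execution n l C \<and> fair n C \<longrightarrow> (\<exists>G. L G \<and> stabilises n C G)) \<and>
     (\<forall>G. L G \<longrightarrow> (\<exists>C. execution n l C \<and> stabilises n C G))"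

definition upairs :: "nat \<Rightarrow> (nat \<times> nat) set" where
  "upairs n = {(u, v). u < v \<and> v < n}"

definition sched :: "nat \<Rightarrow> (nat \<times> nat) stream measure" where
  "sched n = stream_space (measure_pmf (pmf_of_set (upairs n)))"

definition config_at :: "nat \<Rightarrow> (nat \<times> nat) stream \<Rightarrow> nat \<Rightarrow> config" where
  "config_at l \<omega> t = fold (\<lambda>(u, v) c. interact u v c) (stake t \<omega>) (init l)"

end

(* The states count free child slots: the leader and every newly attached node offer two, and
   the only effective interaction attaches an unsettled node as a pendant child of a node with a
   free slot, filling one slot. Hence the active edges always form a tree on the settled nodes,
   rooted at the leader, with at most two children per node, and k settled nodes keep k + 1 free
   slots. A fair execution cannot stop while a free slot and an unsettled node coexist, so it
   ends in a spanning tree of the language; conversely every such tree is produced by attaching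
   its vertices in an order that keeps the attached part connected, once its root is relabelled
   to the leader. For the running time, with k settled nodes at least (k + 1)(n - k)/2 of the
   n(n - 1)/2 pairs attach, so the potential (n - k)/k shrinks in expectation by the factor
   1 - 1/n per interaction; after (a + 2) n ln n interactions Markov's inequality bounds the
   probability that some node is still unsettled by n powr (- a). *)

theory Submission
  imports Defs "HOL-Library.Transitive_Closure_Table" "HOL-Combinatorics.Transposition"
begin

fun free_slots :: "st \<Rightarrow> nat" where
  "free_slots L0 = 2" | "free_slots L1 = 1" | "free_slots O0 = 2" | "free_slots O1 = 1"
| "free_slots _ = 0"

fun used_slots :: "st \<Rightarrow> nat" where
  "used_slots L1 = 1" | "used_slots L2 = 2" | "used_slots O1 = 1" | "used_slots O2 = 2"
| "used_slots _ = 0"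

fun fill_slot :: "st \<Rightarrow> st" where
  "fill_slot L0 = L1" | "fill_slot L1 = L2" | "fill_slot O0 = O1" | "fill_slot O1 = O2"
| "fill_slot s = s"

lemma free_slots_fill_slot: "0 < free_slots s \<Longrightarrow> free_slots (fill_slot s) + 1 = free_slots s"
  by (cases s) auto

lemma used_slots_fill_slot: "0 < free_slots s \<Longrightarrow> used_slots (fill_slot s) = used_slots s + 1"
  by (cases s) auto

lemma fill_slot_neq_F: "0 < free_slots s \<Longrightarrow> fill_slot s \<noteq> F"
  by (cases s) auto

lemma free_slots_le_2: "free_slots s \<le> 2"
  by (cases s) auto

lemma used_slots_le_2: "used_slots s \<le> 2"
  by (cases s) auto

definition attach :: "nat \<Rightarrow> nat \<Rightarrow> config \<Rightarrow> config" where
  "attach p x c = ((fst c)(p := fill_slot (fst c p), x := O0), insert {p, x} (snd c))"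

lemma interact_attach:
  assumes "fst c x = F" "0 < free_slots (fst c p)" "{p, x} \<notin> snd c"
  shows "interact p x c = attach p x c" "interact x p c = attach p x c"
  using assms
  by (cases "fst c p"; auto simp: interact_def apply_rule_def attach_def insert_commute)+

lemma interact_trivial:
  assumes "\<not> (fst c v = F \<and> 0 < free_slots (fst c u) \<and> {u, v} \<notin> snd c)"
    "\<not> (fst c u = F \<and> 0 < free_slots (fst c v) \<and> {u, v} \<notin> snd c)"
  shows "interact u v c = c"
  using assms
  by (cases "fst c u"; cases "fst c v"; auto simp: interact_def apply_rule_def)

lemma interact_cases:
  obtains "interact u v c = c"
  | p x where "p = u \<and> x = v \<or> p = v \<and> x = u" "fst c x = F" "0 < free_slots (fst c p)"
      "{p, x} \<notin> snd c" "interact u v c = attach p x c"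
proof (cases "fst c v = F \<and> 0 < free_slots (fst c u) \<and> {u, v} \<notin> snd c")
  case True
  then show ?thesis using interact_attach(1)[of c v u] that(2) by blast
next
  case False
  then show ?thesis
    using interact_attach(2)[of c u v] interact_trivial[of c v u] that insert_commute
    by metis
qed

section \<open>Trees grown by pendant edges\<close>

abbreviation graph_rel :: "nat \<Rightarrow> nat set set \<Rightarrow> nat \<Rightarrow> nat \<Rightarrow> bool" where
  "graph_rel n G a b \<equiv> a < n \<and> b < n \<and> adj G a b"

lemma adj_sym: "adj G a b \<Longrightarrow> adj G b a"
  by (auto simp: adj_def insert_commute)

lemma adj_insert:
  "adj (insert {p, x} E) a b \<longleftrightarrow> adj E a b \<or> (a \<noteq> b \<and> (a = p \<and> b = x \<or> a = x \<and> b = p))"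
  by (auto simp: adj_def doubleton_eq_iff)

lemma rtranclp_adj_sym:
  assumes "(\<lambda>a b. P a \<and> P b \<and> adj G a b)\<^sup>*\<^sup>* u v"
  shows "(\<lambda>a b. P a \<and> P b \<and> adj G a b)\<^sup>*\<^sup>* v u"
  using assms symp_rtranclp[of "\<lambda>a b. P a \<and> P b \<and> adj G a b"]
  by (auto simp: symp_def dest: adj_sym)

lemma add_pred_mod:
  assumes "i < (m::nat)"
  shows "(i + m - 1) mod m = (if i = 0 then m - 1 else i - 1)"
proof (cases i)
  case (Suc k)
  then have "i + m - 1 = k + m" by simp
  then show ?thesis using Suc assms by simp
qed (use assms in simp)

text \<open>On a cycle through \<open>x\<close> both cyclic neighbours of \<open>x\<close> would have to be \<open>p\<close>.\<close>

lemma has_cycle_insert_pendant: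
  assumes nc: "\<not> has_cycle n E" and isol: "\<forall>e\<in>E. x \<notin> e" and px: "p \<noteq> x"
  shows "\<not> has_cycle n (insert {p, x} E)"
proof
  assume "has_cycle n (insert {p, x} E)"
  then obtain cs where L: "3 \<le> length cs" "distinct cs" "set cs \<subseteq> {0..<n}"
    and A: "\<forall>i<length cs. adj (insert {p, x} E) (cs ! i) (cs ! (Suc i mod length cs))"
    unfolding has_cycle_def by auto
  define m where "m = length cs"
  have nE: "\<not> adj E x y" "\<not> adj E y x" for y using isol by (auto simp: adj_def)
  show False
  proof (cases "x \<in> set cs")
    case False
    have "adj E (cs ! i) (cs ! (Suc i mod m))" if "i < m" for i
    proof -
      have "Suc i mod m < m" using L(1) unfolding m_def by (intro mod_less_divisor) linarith
      then have "cs ! i \<noteq> x" "cs ! (Suc i mod m) \<noteq> x"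
        using False that nth_mem unfolding m_def by metis+
      then show ?thesis using A that by (auto simp: m_def adj_insert)
    qed
    then show False using nc L unfolding has_cycle_def m_def by auto
  next
    case True
    then obtain i where i: "i < m" "cs ! i = x" by (auto simp: in_set_conv_nth m_def)
    define j where "j = (i + m - 1) mod m"
    have m3: "3 \<le> m" using L m_def by simp
    have j_lt: "Suc i mod m < m" "j < m" using m3 by (simp_all add: j_def)
    have j_eq: "j = (if i = 0 then m - 1 else i - 1)"
      unfolding j_def by (rule add_pred_mod[OF i(1)])
    have succ_j: "Suc j mod m = i"
      using i(1) m3 by (cases "i = 0") (simp_all add: j_eq)
    have ne: "Suc i mod m \<noteq> j"
      using i(1) m3 by (cases "Suc i = m"; cases "i = 0") (simp_all add: j_eq)
    have "adj (insert {p, x} E) x (cs ! (Suc i mod m))" using A i by (auto simp: m_def)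
    then have "cs ! (Suc i mod m) = p" using nE px by (simp add: adj_insert)
    moreover have "adj (insert {p, x} E) (cs ! j) x"
      using A j_lt i(2) succ_j by (auto simp: m_def)
    then have "cs ! j = p" using nE px by (simp add: adj_insert)
    ultimately have "Suc i mod m = j" using L(2) j_lt by (metis m_def nth_eq_iff_index_eq)
    then show False using ne by blast
  qed
qed

lemma rtranclp_insert_pendant:
  assumes S': "\<And>a b. S' a b \<Longrightarrow> S a b \<or> (a = p \<and> b = x) \<or> (a = x \<and> b = p)"
    and nx: "\<And>a. \<not> S a x" "\<And>b. \<not> S x b" and px: "p \<noteq> x"
  shows "S'\<^sup>*\<^sup>* a b \<Longrightarrow> a \<noteq> x \<Longrightarrow> (b \<noteq> x \<longrightarrow> S\<^sup>*\<^sup>* a b) \<and> (b = x \<longrightarrow> S\<^sup>*\<^sup>* a p)"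
proof (induction rule: rtranclp_induct)
  case (step y z)
  then have IH: "(y \<noteq> x \<longrightarrow> S\<^sup>*\<^sup>* a y) \<and> (y = x \<longrightarrow> S\<^sup>*\<^sup>* a p)" by blast
  from S'[OF step.hyps(2)] show ?case
  proof (elim disjE)
    assume yz: "S y z"
    then have "y \<noteq> x" "z \<noteq> x" using nx by metis+
    then show ?thesis using IH yz by (simp add: rtranclp.rtrancl_into_rtrancl)
  qed (use IH px in simp_all)
qed simp

lemma child_insert_pendant:
  assumes isol: "\<forall>e\<in>E. x \<notin> e" and px: "p \<noteq> x" and lx: "l \<noteq> x"
    and ch: "child n (insert {p, x} E) l u v"
  shows "(u = p \<and> v = x) \<or> child n E l u v"
proof -
  have nE: "\<not> adj E x y" "\<not> adj E y x" for y using isol by (auto simp: adj_def)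
  let ?S' = "\<lambda>a b. a < n \<and> b < n \<and> a \<noteq> v \<and> b \<noteq> v \<and> adj (insert {p, x} E) a b"
  let ?S = "\<lambda>a b. a < n \<and> b < n \<and> a \<noteq> v \<and> b \<noteq> v \<and> adj E a b"
  from ch have A: "adj (insert {p, x} E) u v" "v \<noteq> l" "?S'\<^sup>*\<^sup>* l u"
    unfolding child_def by auto
  show ?thesis
  proof (cases "adj E u v")
    case True
    then have ux: "u \<noteq> x" "v \<noteq> x" using nE by metis+
    have "?S\<^sup>*\<^sup>* l u"
      using rtranclp_insert_pendant[of ?S' ?S p x, OF _ _ _ px A(3) lx] ux nE
      by (auto simp: adj_insert)
    then show ?thesis using True A(2) unfolding child_def by auto
  next
    case False
    then have "u = p \<and> v = x \<or> u = x \<and> v = p" using A(1) adj_insert by metis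
    moreover have False if "u = x" "v = p"
      using A(3) that lx
      by (cases rule: rtranclp.cases) (use nE adj_insert in metis)+
    ultimately show ?thesis by blast
  qed
qed

lemma card_child_insert_pendant:
  assumes isol: "\<forall>e\<in>E. x \<notin> e" and px: "p \<noteq> x" and lx: "l \<noteq> x"
  shows "card {v. v < n \<and> child n (insert {p, x} E) l u v}
           \<le> card {v. v < n \<and> child n E l u v} + (if u = p then 1 else 0)"
proof -
  have "{v. v < n \<and> child n (insert {p, x} E) l u v}
          \<subseteq> {v. v < n \<and> child n E l u v} \<union> (if u = p then {x} else {})"
    using child_insert_pendant[OF isol px lx] by auto
  then have "card {v. v < n \<and> child n (insert {p, x} E) l u v}
               \<le> card ({v. v < n \<and> child n E l u v} \<union> (if u = p then {x} else {}))"
    by (rule card_mono[rotated]) simp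
  also have "\<dots> \<le> card {v. v < n \<and> child n E l u v} + card (if u = p then {x} else {})"
    by (rule card_Un_le)
  finally show ?thesis by (simp split: if_splits)
qed

lemma no_child_isolated: "\<forall>e\<in>E. x \<notin> e \<Longrightarrow> {v. v < n \<and> child n E l x v} = {}"
  by (auto simp: child_def adj_def)

section \<open>The protocol invariant\<close>

definition num_settled :: "nat \<Rightarrow> config \<Rightarrow> nat" where
  "num_settled n c = card {i. i < n \<and> fst c i \<noteq> F}"

text \<open>The slot equation: each of the \<open>k\<close> settled nodes starts with two slots and each of the
  \<open>k - 1\<close> edges fills one of them, leaving \<open>k + 1\<close> free slots.\<close>

definition protocol_inv :: "nat \<Rightarrow> nat \<Rightarrow> config \<Rightarrow> bool" where
  "protocol_inv n l c \<longleftrightarrow> l < n \<and> fst c l \<noteq> F \<and> snd c \<subseteq> pairs n \<and>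
     (\<forall>e\<in>snd c. \<forall>i\<in>e. fst c i \<noteq> F) \<and>
     (\<Sum>i<n. free_slots (fst c i)) = num_settled n c + 1 \<and>
     \<not> has_cycle n (snd c) \<and>
     (\<forall>u<n. fst c u \<noteq> F \<longrightarrow> (graph_rel n (snd c))\<^sup>*\<^sup>* l u) \<and>
     (\<forall>u<n. card {v. v < n \<and> child n (snd c) l u v} \<le> used_slots (fst c u))"

lemma num_settled_le: "num_settled n c \<le> n"
proof -
  have "card {i. i < n \<and> fst c i \<noteq> F} \<le> card {..<n}" by (rule card_mono) auto
  then show ?thesis by (simp add: num_settled_def)
qed

lemma num_settled_eq_iff: "num_settled n c = n \<longleftrightarrow> (\<forall>i<n. fst c i \<noteq> F)"
proof
  have sub: "{i. i < n \<and> fst c i \<noteq> F} \<subseteq> {..<n}" by auto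
  assume "num_settled n c = n"
  then have "{i. i < n \<and> fst c i \<noteq> F} = {..<n}"
    using card_subset_eq[OF finite_lessThan sub] by (simp add: num_settled_def)
  then show "\<forall>i<n. fst c i \<noteq> F" by blast
next
  assume "\<forall>i<n. fst c i \<noteq> F"
  then have "{i. i < n \<and> fst c i \<noteq> F} = {..<n}" by auto
  then show "num_settled n c = n" by (simp add: num_settled_def)
qed

lemma num_settled_init: "l < n \<Longrightarrow> num_settled n (init l) = 1"
proof -
  assume "l < n"
  then have "{i. i < n \<and> fst (init l) i \<noteq> F} = {l}" by (auto simp: init_def)
  then show ?thesis by (simp add: num_settled_def)
qed

lemma protocol_inv_init: "l < n \<Longrightarrow> protocol_inv n l (init l)"
proof -
  assume l: "l < n"
  have "(\<Sum>i<n. free_slots (fst (init l) i)) = (\<Sum>i<n. if i = l then 2 else 0)"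
    by (rule sum.cong) (auto simp: init_def)
  also have "\<dots> = num_settled n (init l) + 1" using l by (simp add: num_settled_init)
  finally have "(\<Sum>i<n. free_slots (fst (init l) i)) = num_settled n (init l) + 1" .
  moreover have "\<not> has_cycle n {}"
  proof
    assume "has_cycle n {}"
    then obtain cs :: "nat list" where "3 \<le> length cs" "adj {} (cs ! 0) (cs ! (Suc 0 mod length cs))"
      unfolding has_cycle_def by force
    then show False by (simp add: adj_def)
  qed
  moreover have "{v. v < n \<and> child n {} l u v} = {}" for u by (auto simp: child_def adj_def)
  ultimately show ?thesis unfolding protocol_inv_def using l by (simp add: init_def)
qed

lemma num_settled_attach:
  assumes "x < n" "fst c x = F" "0 < free_slots (fst c p)"
  shows "num_settled n (attach p x c) = num_settled n c + 1"
proof -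
  have "{i. i < n \<and> fst (attach p x c) i \<noteq> F} = insert x {i. i < n \<and> fst c i \<noteq> F}"
    using assms fill_slot_neq_F by (auto simp: attach_def)
  then show ?thesis using assms(2) by (simp add: num_settled_def)
qed

lemma sum_fun_upd:
  fixes g :: "'a \<Rightarrow> 'b::comm_monoid_add"
  assumes "finite A" "p \<in> A"
  shows "(\<Sum>i\<in>A. g ((f(p := a)) i)) + g (f p) = (\<Sum>i\<in>A. g (f i)) + g a"
proof -
  have "(\<Sum>i\<in>A - {p}. g ((f(p := a)) i)) = (\<Sum>i\<in>A - {p}. g (f i))"
    by (rule sum.cong) auto
  then show ?thesis using assms by (simp add: sum.remove add_ac)
qed

lemma free_slots_attach:
  assumes "p < n" "x < n" "fst c x = F" "0 < free_slots (fst c p)"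
  shows "(\<Sum>i<n. free_slots (fst (attach p x c) i)) = (\<Sum>i<n. free_slots (fst c i)) + 1"
proof -
  let ?f = "fst c" and ?f' = "(fst c)(p := fill_slot (fst c p))"
  have px: "p \<noteq> x" using assms(3,4) by auto
  have "(\<Sum>i<n. free_slots (?f' i)) + free_slots (?f p)
          = (\<Sum>i<n. free_slots (?f i)) + free_slots (fill_slot (?f p))"
    using sum_fun_upd[of "{..<n}" p free_slots ?f] assms(1) by simp
  moreover have "(\<Sum>i<n. free_slots ((?f'(x := O0)) i)) + free_slots (?f' x)
                   = (\<Sum>i<n. free_slots (?f' i)) + 2"
    using sum_fun_upd[of "{..<n}" x free_slots ?f' O0] assms(2) by simp
  ultimately show ?thesis
    using free_slots_fill_slot[OF assms(4)] px assms(3) by (simp add: attach_def)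
qed

lemma rtranclp_graph_rel_insert:
  assumes lp: "(graph_rel n E)\<^sup>*\<^sup>* l p" and px: "p < n" "x < n" "p \<noteq> x"
    and u: "(graph_rel n E)\<^sup>*\<^sup>* l u \<or> u = x"
  shows "(graph_rel n (insert {p, x} E))\<^sup>*\<^sup>* l u"
proof -
  have mono: "(graph_rel n E)\<^sup>*\<^sup>* a b \<Longrightarrow> (graph_rel n (insert {p, x} E))\<^sup>*\<^sup>* a b" for a b
    by (erule rtranclp_mono[THEN predicate2D, rotated]) (auto simp: adj_def)
  have "graph_rel n (insert {p, x} E) p x" using px by (simp add: adj_def)
  then have "(graph_rel n (insert {p, x} E))\<^sup>*\<^sup>* l x"
    using mono[OF lp] by (rule rtranclp.rtrancl_into_rtrancl[rotated])
  then show ?thesis using u mono by blast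
qed

lemma card_child_attach:
  assumes I: "protocol_inv n l c" and xF: "fst c x = F" and ps: "0 < free_slots (fst c p)"
    and u: "u < n"
  shows "card {v. v < n \<and> child n (snd (attach p x c)) l u v} \<le> used_slots (fst (attach p x c) u)"
proof -
  have px: "p \<noteq> x" using xF ps by auto
  have lx: "l \<noteq> x" and isol: "\<forall>e\<in>snd c. x \<notin> e" using I xF unfolding protocol_inv_def by auto
  note grow = card_child_insert_pendant[OF isol px lx, of n u]
  have old: "card {v. v < n \<and> child n (snd c) l u v} \<le> used_slots (fst c u)"
    using I u unfolding protocol_inv_def by blast
  consider "u = p" | "u = x" | "u \<noteq> p" "u \<noteq> x" by blast
  then show ?thesis
  proof cases
    case 1
    then show ?thesis using grow old used_slots_fill_slot[OF ps] px by (simp add: attach_def)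
  next
    case 2
    then show ?thesis using grow no_child_isolated[OF isol] px by (simp add: attach_def)
  next
    case 3
    then show ?thesis using grow old by (simp add: attach_def)
  qed
qed

lemma protocol_inv_attach:
  assumes I: "protocol_inv n l c" and pn: "p < n" and xn: "x < n" and xF: "fst c x = F"
    and ps: "0 < free_slots (fst c p)"
  shows "protocol_inv n l (attach p x c)"
proof -
  let ?E' = "insert {p, x} (snd c)" and ?f' = "fst (attach p x c)"
  have px: "p \<noteq> x" using xF ps by auto
  have isol: "\<forall>e\<in>snd c. x \<notin> e" using I xF unfolding protocol_inv_def by auto
  have settled': "?f' i \<noteq> F \<longleftrightarrow> fst c i \<noteq> F \<or> i = x" for i
    using fill_slot_neq_F[OF ps] by (auto simp: attach_def)
  have lp: "(graph_rel n (snd c))\<^sup>*\<^sup>* l p" using I pn ps unfolding protocol_inv_def by auto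
  have reach: "(graph_rel n ?E')\<^sup>*\<^sup>* l u" if "u < n" "?f' u \<noteq> F" for u
  proof (rule rtranclp_graph_rel_insert[OF lp pn xn px])
    show "(graph_rel n (snd c))\<^sup>*\<^sup>* l u \<or> u = x"
      using I that settled' unfolding protocol_inv_def by auto
  qed
  have "\<not> has_cycle n ?E'" using I has_cycle_insert_pendant isol px unfolding protocol_inv_def by blast
  moreover have "?E' \<subseteq> pairs n" using I pn xn px by (auto simp: pairs_def protocol_inv_def)
  moreover have "\<forall>e\<in>?E'. \<forall>i\<in>e. ?f' i \<noteq> F" using I settled' ps unfolding protocol_inv_def by auto
  ultimately show ?thesis
    using I reach card_child_attach[OF I xF ps] settled' free_slots_attach[OF pn xn xF ps]
      num_settled_attach[OF xn xF ps]
    unfolding protocol_inv_def by (simp add: attach_def)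
qed

lemma protocol_inv_step:
  assumes "protocol_inv n l c" "step n c c'"
  shows "c' = c \<or> protocol_inv n l c' \<and> num_settled n c' = num_settled n c + 1"
proof -
  obtain u v where uv: "u < n" "v < n" "c' = interact u v c" using assms(2) unfolding step_def by blast
  then show ?thesis
    by (cases rule: interact_cases[of u v c])
      (auto intro: protocol_inv_attach[OF assms(1)] simp: num_settled_attach)
qed

section \<open>Stabilisation under fairness\<close>

lemma execution_protocol_inv:
  assumes "execution n l C" "l < n"
  shows "protocol_inv n l (C t)"
proof (induction t)
  case 0
  then show ?case using assms protocol_inv_init by (simp add: execution_def)
next
  case (Suc t)
  then show ?case using protocol_inv_step[OF Suc.IH] assms(1) by (metis execution_def)
qed

lemma execution_eventually_constant:
  assumes ex: "execution n l C" and l: "l < n"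
  obtains t0 where "\<And>t. t0 \<le> t \<Longrightarrow> C t = C t0"
proof -
  have sc: "C (Suc t) = C t \<or> num_settled n (C (Suc t)) = num_settled n (C t) + 1" for t
    using protocol_inv_step execution_protocol_inv[OF ex l] ex by (metis execution_def)
  have mono: "t \<le> t' \<Longrightarrow> num_settled n (C t) \<le> num_settled n (C t')" for t t'
  proof (induction t' rule: dec_induct)
    case (step m)
    then show ?case using sc[of m] by auto
  qed simp
  define K where "K = range (\<lambda>t. num_settled n (C t))"
  have finK: "finite K" unfolding K_def by (rule finite_subset[of _ "{..n}"]) (auto simp: num_settled_le)
  obtain t0 where t0: "num_settled n (C t0) = Max K"
    using Max_in[OF finK] unfolding K_def by auto
  have same: "num_settled n (C t) = num_settled n (C t0)" if "t0 \<le> t" for t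
    using mono[OF that] Max_ge[OF finK, of "num_settled n (C t)"] t0 by (simp add: K_def)
  have "C t = C t0" if "t0 \<le> t" for t
    using that
  proof (induction t rule: dec_induct)
    case (step m)
    then show ?case using sc[of m] same[of m] same[of "Suc m"] by auto
  qed simp
  then show ?thesis using that by blast
qed

lemma enabled_attach:
  assumes I: "protocol_inv n l c" and k: "num_settled n c < n"
  obtains p x where "p < n" "x < n" "fst c x = F" "0 < free_slots (fst c p)" "{p, x} \<notin> snd c"
proof -
  have "\<not> (\<forall>i<n. fst c i \<noteq> F)" using k num_settled_eq_iff[of n c] by auto
  then obtain x where x: "x < n" "fst c x = F" by blast
  have "(\<Sum>i<n. free_slots (fst c i)) \<noteq> 0" using I unfolding protocol_inv_def by simp
  then obtain p where "p \<in> {..<n}" "free_slots (fst c p) \<noteq> 0" by (meson sum.neutral)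
  then have p: "p < n" "0 < free_slots (fst c p)" by auto
  have "{p, x} \<notin> snd c" using I x unfolding protocol_inv_def by auto
  then show ?thesis using that p x by blast
qed

lemma interact_all_settled:
  assumes "\<forall>i<n. fst c i \<noteq> F" "u < n" "v < n"
  shows "interact u v c = c"
  using assms by (cases rule: interact_cases[of u v c]) auto

lemma protocol_inv_all_settled_treeT:
  assumes I: "protocol_inv n l c" and all: "\<forall>i<n. fst c i \<noteq> F"
  shows "treeT n (snd c)"
proof -
  have reach: "(graph_rel n (snd c))\<^sup>*\<^sup>* l u" if "u < n" for u
    using I all that unfolding protocol_inv_def by blast
  have "connected_graph n (snd c)"
    unfolding connected_graph_def
    using reach rtranclp_adj_sym[of "\<lambda>a. a < n"] by (blast intro: rtranclp_trans)
  moreover have "card {v. v < n \<and> child n (snd c) l u v} \<le> 2" if "u < n" for u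
    using I that used_slots_le_2 le_trans unfolding protocol_inv_def by blast
  ultimately show ?thesis using I unfolding treeT_def is_tree_def protocol_inv_def by blast
qed

lemma iso_refl: "iso n G G"
  unfolding iso_def by (rule exI[of _ id]) simp

text \<open>Once the execution is constant, fairness forbids any enabled attachment, so all nodes
  are settled.\<close>

lemma fair_execution_stabilises:
  assumes l: "l < n" and ex: "execution n l C" and fa: "fair n C"
  shows "\<exists>G. treeT n G \<and> stabilises n C G"
proof -
  obtain t0 where const: "\<And>t. t0 \<le> t \<Longrightarrow> C t = C t0"
    using execution_eventually_constant[OF ex l] by blast
  have I: "protocol_inv n l (C t0)" by (rule execution_protocol_inv[OF ex l])
  have "num_settled n (C t0) = n"
  proof (rule ccontr)
    assume "num_settled n (C t0) \<noteq> n"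
    then obtain p x where px: "p < n" "x < n" "fst (C t0) x = F" "0 < free_slots (fst (C t0) p)"
        "{p, x} \<notin> snd (C t0)"
      using enabled_attach[OF I] num_settled_le[of n "C t0"] by (metis le_neq_implies_less)
    have "step n (C t0) (attach p x (C t0))"
      unfolding step_def using px interact_attach(1)[OF px(3-5)] by fastforce
    moreover have "infinite {t. C t = C t0}"
      using const infinite_Ici[of t0] by (metis (mono_tags) atLeast_iff finite_subset mem_Collect_eq subsetI)
    ultimately have "infinite {t. C t = attach p x (C t0)}" using fa unfolding fair_def by blast
    moreover have "fst (attach p x (C t0)) x \<noteq> fst (C t0) x" using px(3) by (simp add: attach_def)
    then have "attach p x (C t0) \<noteq> C t0" by metis
    then have "{t. C t = attach p x (C t0)} \<subseteq> {..<t0}"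
      using const by (metis (mono_tags) lessThan_iff mem_Collect_eq not_le subsetI)
    ultimately show False using finite_subset by blast
  qed
  then have "treeT n (snd (C t0))"
    using protocol_inv_all_settled_treeT[OF I] num_settled_eq_iff by blast
  moreover have "stabilises n C (snd (C t0))"
    unfolding stabilises_def using const iso_refl by metis
  ultimately show ?thesis by blast
qed

section \<open>Every tree of the language is constructible\<close>

lemma rtrancl_path_nth:
  assumes "rtrancl_path R x xs y"
  shows "\<forall>i<length xs. R ((x # xs) ! i) (xs ! i)" "last (x # xs) = y"
  using assms by (induction; auto simp: nth_Cons split: nat.split)+

lemma has_cycle_closing_path:
  assumes ps: "distinct ps" "set ps \<subseteq> {0..<n}" "2 \<le> length ps"
    and steps: "\<forall>i. Suc i < length ps \<longrightarrow> adj G (ps ! i) (ps ! Suc i)"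
    and b: "b < n" "b \<notin> set ps" "adj G (last ps) b" "adj G b (hd ps)"
  shows "has_cycle n G"
proof -
  define cs where "cs = ps @ [b]"
  have len: "length cs = Suc (length ps)" by (simp add: cs_def)
  have "adj G (cs ! i) (cs ! ((i + 1) mod length cs))" if i: "i < length cs" for i
  proof -
    consider "Suc i < length ps" | "Suc i = length ps" | "i = length ps" using i len by linarith
    then show ?thesis
    proof cases
      case 1
      then show ?thesis using steps len by (simp add: cs_def nth_append)
    next
      case 2
      then have "i = length ps - 1" "ps \<noteq> []" by auto
      then have "cs ! i = last ps" by (simp add: cs_def nth_append last_conv_nth)
      then show ?thesis using 2 b(3) len by (simp add: cs_def nth_append)
    next
      case 3
      moreover have "ps \<noteq> []" using ps(3) by auto
      ultimately show ?thesis using b(4) len by (simp add: cs_def nth_append hd_conv_nth)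
    qed
  qed
  moreover have "3 \<le> length cs" "distinct cs" "set cs \<subseteq> {0..<n}" using ps b len by (auto simp: cs_def)
  ultimately show ?thesis unfolding has_cycle_def by blast
qed

lemma has_cycle_path_closed:
  assumes path: "(\<lambda>u v. u \<in> S \<and> v \<in> S \<and> adj G u v)\<^sup>*\<^sup>* a y"
    and S: "S \<subseteq> {..<n}" "b \<notin> S" and bn: "b < n"
    and ay: "a \<noteq> y" and ab: "adj G a b" and yb: "adj G y b"
  shows "has_cycle n G"
proof -
  let ?Q = "\<lambda>u v. u \<in> S \<and> v \<in> S \<and> adj G u v"
  obtain xs0 where "rtrancl_path ?Q a xs0 y" using path rtranclp_eq_rtrancl_path by metis
  then obtain xs where p: "rtrancl_path ?Q a xs y" "distinct (a # xs)"
    by (rule rtrancl_path_distinct)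
  have steps: "\<forall>i<length xs. ?Q ((a # xs) ! i) (xs ! i)" and last: "last (a # xs) = y"
    using rtrancl_path_nth[OF p(1)] by simp_all
  then have "xs \<noteq> []" using ay by auto
  have "a \<in> S" using steps \<open>xs \<noteq> []\<close> by (metis length_greater_0_conv nth_Cons_0)
  moreover have "set xs \<subseteq> S" using steps by (auto simp: in_set_conv_nth)
  ultimately have "set (a # xs) \<subseteq> {0..<n}" "b \<notin> set (a # xs)" using S by auto
  then show ?thesis
    using has_cycle_closing_path[of "a # xs" n G b] p(2) S bn steps last yb ab adj_sym \<open>xs \<noteq> []\<close>
    by (auto simp: Suc_le_eq)
qed

lemma rtranclp_leaves_set:
  "R\<^sup>*\<^sup>* x y \<Longrightarrow> x \<in> S \<Longrightarrow> y \<notin> S \<Longrightarrow> \<exists>a b. R a b \<and> a \<in> S \<and> b \<notin> S"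
  by (induction rule: rtranclp_induct) blast+

definition slot_state :: "bool \<Rightarrow> nat \<Rightarrow> st" where
  "slot_state is_root m = (if is_root then (if m = 0 then L0 else if m = 1 then L1 else L2)
                        else (if m = 0 then O0 else if m = 1 then O1 else O2))"

lemma free_slots_slot_state: "m \<le> 1 \<Longrightarrow> 0 < free_slots (slot_state is_root m)"
  by (auto simp: slot_state_def)

lemma fill_slot_slot_state: "m \<le> 1 \<Longrightarrow> fill_slot (slot_state is_root m) = slot_state is_root (Suc m)"
  by (auto simp: slot_state_def)

lemma slot_state_neq_F: "slot_state is_root m \<noteq> F"
  by (auto simp: slot_state_def)

abbreviation relabel :: "nat \<Rightarrow> nat \<Rightarrow> nat \<Rightarrow> nat" where
  "relabel \<equiv> Transposition.transpose"

lemmas relabel_inj_eq = inj_eq[OF inj_transpose]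

lemma relabel_less: "r < n \<Longrightarrow> l < n \<Longrightarrow> i < n \<Longrightarrow> relabel r l i < n"
  by (simp add: Transposition.transpose_def)

text \<open>Vertex \<open>i\<close> of \<open>G\<close> is carried by node \<open>relabel r l i\<close>, which puts the root \<open>r\<close> of \<open>G\<close>
  on the leader \<open>l\<close>.\<close>

definition realises_subtree :: "nat \<Rightarrow> nat set set \<Rightarrow> nat \<Rightarrow> nat \<Rightarrow> nat set \<Rightarrow> config \<Rightarrow> bool" where
  "realises_subtree n G r l S c \<longleftrightarrow> r \<in> S \<and> S \<subseteq> {..<n} \<and>
     (\<forall>i\<in>S. \<exists>m \<le> card {w \<in> S. child n G r i w}. fst c (relabel r l i) = slot_state (i = r) m) \<and>
     (\<forall>i<n. i \<notin> S \<longrightarrow> fst c (relabel r l i) = F) \<and>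
     snd c = {{relabel r l a, relabel r l b} | a b. a \<in> S \<and> b \<in> S \<and> {a, b} \<in> G} \<and>
     (\<forall>a\<in>S. (\<lambda>x y. x \<in> S \<and> y \<in> S \<and> adj G x y)\<^sup>*\<^sup>* r a)"

lemma realises_subtreeE:
  assumes "realises_subtree n G r l S c"
  obtains "r \<in> S" "S \<subseteq> {..<n}"
    "\<forall>i\<in>S. \<exists>m \<le> card {w \<in> S. child n G r i w}. fst c (relabel r l i) = slot_state (i = r) m"
    "\<forall>i<n. i \<notin> S \<longrightarrow> fst c (relabel r l i) = F"
    "snd c = {{relabel r l x, relabel r l y} | x y. x \<in> S \<and> y \<in> S \<and> {x, y} \<in> G}"
    "\<forall>x\<in>S. (\<lambda>x y. x \<in> S \<and> y \<in> S \<and> adj G x y)\<^sup>*\<^sup>* r x"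
  using assms unfolding realises_subtree_def by (elim conjE) (rule that; assumption)

lemma pairs_ne: "{a, b} \<in> pairs n \<Longrightarrow> a \<noteq> b"
  unfolding pairs_def by (auto simp: doubleton_eq_iff)

lemma realises_subtree_init:
  assumes "r < n" "l < n" "G \<subseteq> pairs n"
  shows "realises_subtree n G r l {r} (init l)"
proof -
  have "{{relabel r l a, relabel r l b} | a b. a \<in> {r} \<and> b \<in> {r} \<and> {a, b} \<in> G} = {}"
    using assms(3) pairs_ne by fastforce
  moreover have "fst (init l) (relabel r l i) = F" if "i \<noteq> r" for i
    using that by (auto simp: init_def Transposition.transpose_def)
  ultimately show ?thesis
    unfolding realises_subtree_def using assms(1) by (auto simp: init_def slot_state_def)
qed

lemma image_edges_insert_pendant:
  assumes G: "G \<subseteq> pairs n" and a: "a \<in> S" "{a, b} \<in> G" and b: "b \<notin> S"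
    and uniq: "\<And>y. y \<in> S \<Longrightarrow> {y, b} \<in> G \<Longrightarrow> y = a"
  shows "{{f x, f y} | x y. x \<in> insert b S \<and> y \<in> insert b S \<and> {x, y} \<in> G}
           = insert {f a, f b} {{f x, f y} | x y. x \<in> S \<and> y \<in> S \<and> {x, y} \<in> G}"
    (is "?L = ?R")
proof
  show "?R \<subseteq> ?L" using a by blast
  show "?L \<subseteq> ?R"
  proof
    fix e assume "e \<in> ?L"
    then obtain x y where xy: "e = {f x, f y}" "x \<in> insert b S" "y \<in> insert b S" "{x, y} \<in> G"
      by blast
    have "x \<noteq> y" using xy(4) G pairs_ne by blast
    then consider "x = b" "y \<in> S" | "y = b" "x \<in> S" | "x \<in> S" "y \<in> S" using xy by blast
    then show "e \<in> ?R"
    proof cases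
      case 1
      then have "y = a" using uniq xy(4) by (simp add: insert_commute)
      then show ?thesis using 1 xy(1) by (simp add: insert_commute)
    next
      case 2
      then have "x = a" using uniq xy(4) by simp
      then show ?thesis using 2 xy(1) by simp
    qed (use xy in blast)
  qed
qed

lemma rtranclp_within_insert:
  assumes conn: "\<forall>x\<in>S. (\<lambda>x y. x \<in> S \<and> y \<in> S \<and> adj G x y)\<^sup>*\<^sup>* r x" and a: "a \<in> S" "adj G a b"
  shows "\<forall>x\<in>insert b S. (\<lambda>x y. x \<in> insert b S \<and> y \<in> insert b S \<and> adj G x y)\<^sup>*\<^sup>* r x"
proof -
  let ?R = "\<lambda>x y. x \<in> insert b S \<and> y \<in> insert b S \<and> adj G x y"
  have grow: "?R\<^sup>*\<^sup>* r y" if "y \<in> S" for y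
    using conn that by (blast intro: rtranclp_mono[THEN predicate2D, rotated])
  have "?R\<^sup>*\<^sup>* r b" using a by (intro rtranclp.rtrancl_into_rtrancl[OF grow[OF a(1)]]) simp
  then show ?thesis using grow by blast
qed

lemma slot_states_attach:
  assumes states: "\<forall>i\<in>S. \<exists>m \<le> card {w \<in> S. child n G r i w}. f (relabel r l i) = slot_state (i = r) m"
    and finS: "finite S" and a: "a \<in> S" "child n G r a b" and b: "b \<notin> S" "b \<noteq> r"
    and m: "m \<le> card {w \<in> S. child n G r a w}"
  shows "\<forall>i\<in>insert b S. \<exists>m' \<le> card {w \<in> insert b S. child n G r i w}.
           (f(relabel r l a := slot_state (a = r) (Suc m), relabel r l b := O0)) (relabel r l i)
             = slot_state (i = r) m'"
proof
  let ?S' = "insert b S"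
  fix i assume i: "i \<in> ?S'"
  have more_children: "card {w \<in> S. child n G r i w} \<le> card {w \<in> ?S'. child n G r i w}"
    using finS by (intro card_mono) auto
  have "{w \<in> ?S'. child n G r a w} = insert b {w \<in> S. child n G r a w}" using a(2) by auto
  then have children_a: "card {w \<in> ?S'. child n G r a w} = Suc (card {w \<in> S. child n G r a w})"
    using finS b(1) by simp
  have ab: "a \<noteq> b" using a(1) b(1) by blast
  consider "i = b" | "i = a" | "i \<in> S" "i \<noteq> a" "i \<noteq> b" using i by blast
  then show "\<exists>m' \<le> card {w \<in> ?S'. child n G r i w}.
      (f(relabel r l a := slot_state (a = r) (Suc m), relabel r l b := O0)) (relabel r l i)
        = slot_state (i = r) m'"
  proof cases
    case 1
    then show ?thesis using b(2) by (intro exI[of _ 0]) (simp add: slot_state_def)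
  next
    case 2
    then show ?thesis using m children_a ab by (intro exI[of _ "Suc m"]) (simp add: relabel_inj_eq)
  next
    case 3
    then obtain m' where "m' \<le> card {w \<in> S. child n G r i w}" "f (relabel r l i) = slot_state (i = r) m'"
      using states by blast
    then show ?thesis using 3 more_children by (intro exI[of _ m']) (simp add: relabel_inj_eq)
  qed
qed

lemma realises_subtree_attach:
  assumes R: "realises_subtree n G r l S c" and G: "G \<subseteq> pairs n"
    and a: "a \<in> S" "child n G r a b" "card {w \<in> S. child n G r a w} \<le> 1"
    and b: "b < n" "b \<notin> S" and uniq: "\<And>y. y \<in> S \<Longrightarrow> {y, b} \<in> G \<Longrightarrow> y = a"
  shows "realises_subtree n G r l (insert b S) (attach (relabel r l a) (relabel r l b) c)"
proof -
  let ?\<sigma> = "relabel r l" and ?S' = "insert b S"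
  let ?c' = "attach (?\<sigma> a) (?\<sigma> b) c"
  obtain rS: "r \<in> S" and Sn: "S \<subseteq> {..<n}"
    and states: "\<forall>i\<in>S. \<exists>m \<le> card {w \<in> S. child n G r i w}. fst c (?\<sigma> i) = slot_state (i = r) m"
    and free: "\<forall>i<n. i \<notin> S \<longrightarrow> fst c (?\<sigma> i) = F"
    and edges: "snd c = {{?\<sigma> x, ?\<sigma> y} | x y. x \<in> S \<and> y \<in> S \<and> {x, y} \<in> G}"
    and conn: "\<forall>x\<in>S. (\<lambda>x y. x \<in> S \<and> y \<in> S \<and> adj G x y)\<^sup>*\<^sup>* r x"
    using R by (rule realises_subtreeE)
  obtain m where m: "m \<le> card {w \<in> S. child n G r a w}" "fst c (?\<sigma> a) = slot_state (a = r) m"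
    using states a(1) by blast
  have fst': "fst ?c' = (fst c)(?\<sigma> a := slot_state (a = r) (Suc m), ?\<sigma> b := O0)"
    using fill_slot_slot_state m a(3) by (simp add: attach_def)
  have "b \<noteq> r" using rS b(2) by blast
  then have states': "\<forall>i\<in>?S'. \<exists>m' \<le> card {w \<in> ?S'. child n G r i w}. fst ?c' (?\<sigma> i) = slot_state (i = r) m'"
    unfolding fst' using slot_states_attach[OF states _ a(1,2) b(2) _ m(1)] Sn finite_subset by blast
  have ab_G: "{a, b} \<in> G" using a(2) by (simp add: child_def adj_def)
  have "snd ?c' = insert {?\<sigma> a, ?\<sigma> b} (snd c)" by (simp add: attach_def)
  also have "\<dots> = {{?\<sigma> x, ?\<sigma> y} | x y. x \<in> ?S' \<and> y \<in> ?S' \<and> {x, y} \<in> G}"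
    unfolding edges by (rule image_edges_insert_pendant[OF G a(1) ab_G b(2) uniq, symmetric])
  finally have edges': "snd ?c' = {{?\<sigma> x, ?\<sigma> y} | x y. x \<in> ?S' \<and> y \<in> ?S' \<and> {x, y} \<in> G}" .
  have conn': "\<forall>x\<in>?S'. (\<lambda>x y. x \<in> ?S' \<and> y \<in> ?S' \<and> adj G x y)\<^sup>*\<^sup>* r x"
    using rtranclp_within_insert[OF conn a(1)] a(2) by (simp add: child_def)
  have free': "\<forall>i<n. i \<notin> ?S' \<longrightarrow> fst ?c' (?\<sigma> i) = F"
    using free a(1) by (auto simp: fst' relabel_inj_eq)
  have "r \<in> ?S'" "?S' \<subseteq> {..<n}" using rS Sn b(1) by auto
  then show ?thesis unfolding realises_subtree_def
    by (intro conjI) (assumption | rule states' free' edges' conn')+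
qed

context
  fixes n G r l
  assumes tree: "is_tree n G" and rn: "r < n" and ln: "l < n"
    and deg: "\<forall>u<n. card {v. v < n \<and> child n G r u v} \<le> 2"
begin

lemma tree_pendant_edge:
  assumes rS: "r \<in> S" and Sn: "S \<subseteq> {..<n}" and S_ne: "S \<noteq> {..<n}"
    and conn: "\<forall>a\<in>S. (\<lambda>x y. x \<in> S \<and> y \<in> S \<and> adj G x y)\<^sup>*\<^sup>* r a"
  obtains a b where "a \<in> S" "b < n" "b \<notin> S" "child n G r a b"
    "\<And>y. y \<in> S \<Longrightarrow> {y, b} \<in> G \<Longrightarrow> y = a"
proof -
  obtain b0 where b0: "b0 < n" "b0 \<notin> S" using Sn S_ne by blast
  have "(graph_rel n G)\<^sup>*\<^sup>* r b0" using tree rn b0 unfolding is_tree_def connected_graph_def by blast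
  then obtain a b where ab: "a < n" "b < n" "adj G a b" "a \<in> S" "b \<notin> S"
    using rtranclp_leaves_set[of _ r b0 S] rS b0 by blast
  have "(\<lambda>x y. x < n \<and> y < n \<and> x \<noteq> b \<and> y \<noteq> b \<and> adj G x y)\<^sup>*\<^sup>* r a"
    using conn ab(4,5) Sn
    by (blast intro: rtranclp_mono[THEN predicate2D, rotated])
  then have "child n G r a b" unfolding child_def using ab rS by blast
  moreover have "y = a" if "y \<in> S" "{y, b} \<in> G" for y
  proof (rule ccontr)
    assume "y \<noteq> a"
    have path: "(\<lambda>x y. x \<in> S \<and> y \<in> S \<and> adj G x y)\<^sup>*\<^sup>* a y"
      using conn ab(4) that(1) rtranclp_adj_sym[of "\<lambda>x. x \<in> S"] by (blast intro: rtranclp_trans)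
    have "adj G y b" using that ab(5) by (auto simp: adj_def)
    then have "has_cycle n G"
      using has_cycle_path_closed[OF path Sn ab(5) ab(2) _ ab(3)] \<open>y \<noteq> a\<close> by blast
    then show False using tree unfolding is_tree_def by blast
  qed
  ultimately show ?thesis using that ab by blast
qed

lemma card_children_within_le_1:
  assumes Sn: "S \<subseteq> {..<n}" and a: "a \<in> S" and b: "b < n" "b \<notin> S" "child n G r a b"
  shows "card {w \<in> S. child n G r a w} \<le> 1"
proof -
  have "insert b {w \<in> S. child n G r a w} \<subseteq> {v. v < n \<and> child n G r a v}"
    using a b Sn by auto
  then have "card (insert b {w \<in> S. child n G r a w}) \<le> card {v. v < n \<and> child n G r a v}"
    by (rule card_mono[rotated]) simp
  also have "\<dots> \<le> 2" using deg a Sn by blast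
  finally show ?thesis using Sn b(2) finite_subset[OF Sn] by simp
qed

lemma realises_subtree_step:
  assumes R: "realises_subtree n G r l S c" and cS: "card S < n"
  obtains b c' where "b \<notin> S" "realises_subtree n G r l (insert b S) c'" "step n c c'"
proof -
  let ?\<sigma> = "relabel r l"
  obtain rS: "r \<in> S" and Sn: "S \<subseteq> {..<n}"
    and states: "\<forall>i\<in>S. \<exists>m \<le> card {w \<in> S. child n G r i w}. fst c (?\<sigma> i) = slot_state (i = r) m"
    and free: "\<forall>i<n. i \<notin> S \<longrightarrow> fst c (?\<sigma> i) = F"
    and edges: "snd c = {{?\<sigma> x, ?\<sigma> y} | x y. x \<in> S \<and> y \<in> S \<and> {x, y} \<in> G}"
    and conn: "\<forall>x\<in>S. (\<lambda>x y. x \<in> S \<and> y \<in> S \<and> adj G x y)\<^sup>*\<^sup>* r x"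
    using R by (rule realises_subtreeE)
  have "S \<noteq> {..<n}" using cS by auto
  then obtain a b where ab: "a \<in> S" "b < n" "b \<notin> S" "child n G r a b"
    and uniq: "\<And>y. y \<in> S \<Longrightarrow> {y, b} \<in> G \<Longrightarrow> y = a"
    using tree_pendant_edge[OF rS Sn _ conn] by blast
  have an: "a < n" using ab(1) Sn by blast
  have children: "card {w \<in> S. child n G r a w} \<le> 1"
    using card_children_within_le_1[OF Sn ab(1-4)] .
  obtain m where m: "m \<le> card {w \<in> S. child n G r a w}" "fst c (?\<sigma> a) = slot_state (a = r) m"
    using states ab(1) by blast
  have "fst c (?\<sigma> b) = F" using free ab(2,3) by blast
  moreover have "{?\<sigma> a, ?\<sigma> b} \<notin> snd c"
    using ab(3) unfolding edges by (auto simp: doubleton_eq_iff relabel_inj_eq)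
  ultimately have "interact (?\<sigma> a) (?\<sigma> b) c = attach (?\<sigma> a) (?\<sigma> b) c"
    using interact_attach(1) free_slots_slot_state m children by (metis le_trans)
  moreover have "?\<sigma> a \<noteq> ?\<sigma> b" using ab by (auto simp: relabel_inj_eq)
  ultimately have "step n c (attach (?\<sigma> a) (?\<sigma> b) c)"
    unfolding step_def using an ab(2) relabel_less[OF rn ln] by metis
  moreover have "G \<subseteq> pairs n" using tree unfolding is_tree_def by blast
  ultimately show ?thesis
    using that ab realises_subtree_attach[OF R _ ab(1,4) children ab(2,3) uniq] by blast
qed

lemma realising_prefix_exists:
  assumes "Suc j \<le> n"
  shows "\<exists>S C. card S = Suc j \<and> realises_subtree n G r l S (C j) \<and> C 0 = init l \<and>
           (\<forall>t<j. step n (C t) (C (Suc t)))"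
  using assms
proof (induction j)
  case 0
  have "G \<subseteq> pairs n" using tree unfolding is_tree_def by blast
  then show ?case using realises_subtree_init[OF rn ln] by (intro exI[of _ "{r}"] exI[of _ "\<lambda>_. init l"]) simp
next
  case (Suc j)
  then obtain S C where SC: "card S = Suc j" "realises_subtree n G r l S (C j)" "C 0 = init l"
    "\<forall>t<j. step n (C t) (C (Suc t))" by auto
  obtain b c' where bc: "b \<notin> S" "realises_subtree n G r l (insert b S) c'" "step n (C j) c'"
    using realises_subtree_step[OF SC(2)] SC(1) Suc.prems by (metis Suc_le_lessD)
  have "S \<subseteq> {..<n}" using SC(2) by (rule realises_subtreeE)
  then have "finite S" using finite_subset by blast
  then have "card (insert b S) = Suc (Suc j)" using bc(1) SC(1) by simp
  moreover have "\<forall>t<Suc j. step n ((C(Suc j := c')) t) ((C(Suc j := c')) (Suc t))"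
    using SC(4) bc(3) by (auto simp: less_Suc_eq)
  ultimately show ?case using bc(2) SC(3) by (intro exI[of _ "insert b S"] exI[of _ "C(Suc j := c')"]) simp
qed

end

lemma realises_all_iso:
  assumes R: "realises_subtree n G r l {..<n} c" and rn: "r < n" and ln: "l < n"
  shows "iso n (snd c) G"
  unfolding iso_def
proof (intro exI conjI allI impI)
  let ?\<sigma> = "relabel r l"
  show "bij_betw ?\<sigma> {0..<n} {0..<n}" using rn ln by simp
  have edges: "snd c = {{?\<sigma> x, ?\<sigma> y} | x y. x \<in> {..<n} \<and> y \<in> {..<n} \<and> {x, y} \<in> G}"
    using R by (rule realises_subtreeE)
  fix u v assume u: "u < n" and v: "v < n"
  show "adj (snd c) u v \<longleftrightarrow> adj G (?\<sigma> u) (?\<sigma> v)"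
  proof
    assume "adj (snd c) u v"
    then obtain x y where "u \<noteq> v" "{u, v} = {?\<sigma> x, ?\<sigma> y}" "{x, y} \<in> G"
      unfolding adj_def edges by blast
    then show "adj G (?\<sigma> u) (?\<sigma> v)"
      by (auto simp: adj_def doubleton_eq_iff insert_commute relabel_inj_eq)
  next
    assume A: "adj G (?\<sigma> u) (?\<sigma> v)"
    have "?\<sigma> u \<in> {..<n}" "?\<sigma> v \<in> {..<n}" using u v relabel_less[OF rn ln] by auto
    then have "{?\<sigma> (?\<sigma> u), ?\<sigma> (?\<sigma> v)} \<in> snd c"
      using A unfolding edges adj_def by blast
    moreover have "u \<noteq> v" using A by (auto simp: adj_def)
    ultimately show "adj (snd c) u v" by (simp add: adj_def)
  qed
qed

lemma realises_all_settled:
  assumes R: "realises_subtree n G r l {..<n} c" and rn: "r < n" and ln: "l < n"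
  shows "\<forall>i<n. fst c i \<noteq> F"
proof (intro allI impI)
  fix i assume "i < n"
  then have "relabel r l i \<in> {..<n}" using relabel_less[OF rn ln] by simp
  then show "fst c i \<noteq> F"
    using R slot_state_neq_F by (elim realises_subtreeE) (metis Transposition.transpose_involutory)
qed

text \<open>Grow the tree one pendant edge at a time, then let the execution idle: once every
  node is settled no interaction changes the configuration.\<close>

lemma treeT_constructible:
  assumes n2: "2 \<le> n" and ln: "l < n" and T: "treeT n G"
  shows "\<exists>C. execution n l C \<and> stabilises n C G"
proof -
  obtain r where rn: "r < n" and deg: "\<forall>u<n. card {v. v < n \<and> child n G r u v} \<le> 2"
    and tree: "is_tree n G"
    using T unfolding treeT_def by blast
  obtain S C where SC: "card S = n" "realises_subtree n G r l S (C (n - 1))" "C 0 = init l"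
      "\<forall>t<n - 1. step n (C t) (C (Suc t))"
    using realising_prefix_exists[OF tree rn ln deg, of "n - 1"] n2 by auto
  define c where "c = C (n - 1)"
  have "S \<subseteq> {..<n}" using SC(2) by (rule realises_subtreeE)
  then have "S = {..<n}" using SC(1) card_subset_eq[of "{..<n}" S] by simp
  then have R: "realises_subtree n G r l {..<n} c" using SC(2) by (simp add: c_def)
  have idle: "step n c c"
    unfolding step_def using interact_all_settled[OF realises_all_settled[OF R rn ln], of 0 1] n2
    by (intro exI[of _ 0] exI[of _ 1]) simp
  define C' where "C' t = (if t \<le> n - 1 then C t else c)" for t
  have "step n (C' t) (C' (Suc t))" for t
  proof (cases "t < n - 1")
    case True
    then show ?thesis using SC(4) by (simp add: C'_def)
  next
    case False
    then have "C' t = c" "C' (Suc t) = c" by (auto simp: C'_def c_def)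
    then show ?thesis using idle by simp
  qed
  then have "execution n l C'" unfolding execution_def using SC(3) by (simp add: C'_def)
  moreover have "stabilises n C' G"
  proof -
    have "C' t = c" if "n - 1 \<le> t" for t using that by (auto simp: C'_def c_def)
    then show ?thesis unfolding stabilises_def using realises_all_iso[OF R rn ln] by metis
  qed
  ultimately show ?thesis by blast
qed

lemma protocol_stably_constructs_treeT: "2 \<le> n \<Longrightarrow> l < n \<Longrightarrow> stably_constructs n l (treeT n)"
  unfolding stably_constructs_def using fair_execution_stabilises treeT_constructible by blast

section \<open>Logarithmic stabilisation time\<close>

definition interact_pair :: "nat \<times> nat \<Rightarrow> config \<Rightarrow> config" where
  "interact_pair x c = interact (fst x) (snd x) c"

definition run :: "config \<Rightarrow> (nat \<times> nat) list \<Rightarrow> config" where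
  "run c xs = fold interact_pair xs c"

lemma config_at_eq_run: "config_at l \<omega> t = run (init l) (stake t \<omega>)"
proof -
  have "(\<lambda>(u, v). interact u v) = interact_pair" by (auto simp: interact_pair_def fun_eq_iff)
  then show ?thesis by (simp add: config_at_def run_def)
qed

lemma run_simps [simp]:
  "run c [] = c" "run c (x # xs) = run (interact_pair x c) xs" "run c (xs @ ys) = run (run c xs) ys"
  by (simp_all add: run_def)

lemma step_interact_pair:
  assumes "x \<in> upairs n"
  shows "step n c (interact_pair x c)"
proof -
  obtain u v where "x = (u, v)" "u < v" "v < n" using assms by (auto simp: upairs_def)
  then show ?thesis unfolding step_def interact_pair_def by (intro exI[of _ u] exI[of _ v]) simp
qed

lemma protocol_inv_interact_pair:
  "protocol_inv n l c \<Longrightarrow> x \<in> upairs n \<Longrightarrow> protocol_inv n l (interact_pair x c)"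
  using protocol_inv_step step_interact_pair by metis

lemma protocol_inv_run:
  "set xs \<subseteq> upairs n \<Longrightarrow> protocol_inv n l c \<Longrightarrow> protocol_inv n l (run c xs)"
  by (induction xs arbitrary: c) (simp_all add: protocol_inv_interact_pair)

lemma run_all_settled: "set xs \<subseteq> upairs n \<Longrightarrow> \<forall>i<n. fst c i \<noteq> F \<Longrightarrow> run c xs = c"
  by (induction xs) (auto simp: interact_pair_def upairs_def interact_all_settled)

lemma finite_upairs: "finite (upairs n)"
  by (rule finite_subset[of _ "{..<n} \<times> {..<n}"]) (auto simp: upairs_def)

lemma upairs_nonempty: "2 \<le> n \<Longrightarrow> upairs n \<noteq> {}"
proof -
  assume "2 \<le> n"
  then have "(0, 1) \<in> upairs n" by (simp add: upairs_def)
  then show ?thesis by blast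
qed

lemma card_upairs: "2 * card (upairs n) = n * (n - 1)"
proof (induction n)
  case (Suc n)
  have "upairs (Suc n) = upairs n \<union> (\<lambda>u. (u, n)) ` {..<n}" by (auto simp: upairs_def)
  moreover have "upairs n \<inter> (\<lambda>u. (u, n)) ` {..<n} = {}" by (auto simp: upairs_def)
  moreover have "card ((\<lambda>u. (u, n)) ` {..<n}) = n" by (subst card_image) (auto simp: inj_on_def)
  ultimately have "card (upairs (Suc n)) = card (upairs n) + n"
    using finite_upairs by (simp add: card_Un_disjoint)
  then show ?case using Suc.IH by (cases n) (auto simp: algebra_simps)
qed (simp add: upairs_def)

lemma num_settled_pos: "protocol_inv n l c \<Longrightarrow> 1 \<le> num_settled n c"
proof -
  assume "protocol_inv n l c"
  then have "{l} \<subseteq> {i. i < n \<and> fst c i \<noteq> F}" by (simp add: protocol_inv_def)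
  then have "card {l} \<le> card {i. i < n \<and> fst c i \<noteq> F}" by (rule card_mono[rotated]) simp
  then show ?thesis by (simp add: num_settled_def)
qed

lemma card_free_slot_nodes:
  assumes "protocol_inv n l c"
  shows "num_settled n c + 1 \<le> 2 * card {p. p < n \<and> 0 < free_slots (fst c p)}"
proof -
  let ?A = "{p. p < n \<and> 0 < free_slots (fst c p)}"
  have "num_settled n c + 1 = (\<Sum>i<n. free_slots (fst c i))"
    using assms unfolding protocol_inv_def by simp
  also have "\<dots> = (\<Sum>i\<in>?A. free_slots (fst c i))" by (rule sum.mono_neutral_right) auto
  also have "\<dots> \<le> (\<Sum>i\<in>?A. 2)" by (rule sum_mono) (simp add: free_slots_le_2)
  finally show ?thesis by simp
qed

text \<open>Every pair of a node with a free slot and an unsettled node is an attaching interaction,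
  which gives at least \<open>(k + 1)(n - k)/2\<close> of them.\<close>

lemma card_progress_pairs:
  assumes I: "protocol_inv n l c"
  shows "(num_settled n c + 1) * (n - num_settled n c)
           \<le> 2 * card {x \<in> upairs n. num_settled n (interact_pair x c) = num_settled n c + 1}"
proof -
  define A where "A = {p. p < n \<and> 0 < free_slots (fst c p)}"
  define U where "U = {x. x < n \<and> fst c x = F}"
  define P where "P = {x \<in> upairs n. num_settled n (interact_pair x c) = num_settled n c + 1}"
  define h where "h = (\<lambda>(p::nat, x::nat). (min p x, max p x))"
  have "{..<n} = U \<union> {i. i < n \<and> fst c i \<noteq> F}" "U \<inter> {i. i < n \<and> fst c i \<noteq> F} = {}"
    by (auto simp: U_def)
  then have card_U: "card U = n - num_settled n c"
    unfolding num_settled_def by (metis card_Un_disjoint card_lessThan finite_Un finite_lessThan add_diff_cancel_right')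
  have "h ` (A \<times> U) \<subseteq> P"
  proof
    fix y assume "y \<in> h ` (A \<times> U)"
    then obtain p x where px: "p \<in> A" "x \<in> U" "y = h (p, x)" by blast
    then have p: "p < n" "0 < free_slots (fst c p)" and x: "x < n" "fst c x = F"
      by (auto simp: A_def U_def)
    then have "p \<noteq> x" by auto
    have "{p, x} \<notin> snd c" using I x unfolding protocol_inv_def by auto
    then have "interact_pair y c = attach p x c"
      using interact_attach[OF x(2) p(2)] px(3) \<open>p \<noteq> x\<close>
      by (cases "p < x") (auto simp: interact_pair_def h_def)
    then show "y \<in> P"
      using num_settled_attach[OF x p(2)] px(3) p x \<open>p \<noteq> x\<close>
      by (auto simp: P_def h_def upairs_def)
  qed
  moreover have "inj_on h (A \<times> U)"
    by (rule inj_onI) (auto simp: h_def A_def U_def min_def max_def split: if_splits)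
  ultimately have "card (A \<times> U) \<le> card P"
    using finite_upairs by (intro card_inj_on_le) (auto simp: P_def)
  then have "card A * (n - num_settled n c) \<le> card P" using card_U by (simp add: card_cartesian_product)
  moreover have "(num_settled n c + 1) * (n - num_settled n c) \<le> 2 * card A * (n - num_settled n c)"
    using card_free_slot_nodes[OF I] unfolding A_def by (rule mult_right_mono) simp
  ultimately show ?thesis unfolding P_def by linarith
qed

definition potential :: "nat \<Rightarrow> nat \<Rightarrow> real" where
  "potential n k = (real n - real k) / real k"

lemma potential_drift_real:
  fixes U g N K :: real
  assumes U: "2 * U = N * (N - 1)" and g: "(K + 1) * (N - K) \<le> 2 * g" and K: "1 \<le> K" "K < N"
  shows "(U - g) * ((N - K) / K) + g * ((N - (K + 1)) / (K + 1)) \<le> U * (1 - 1 / N) * ((N - K) / K)"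
proof -
  have K0: "0 < K" "0 < N" "K + 1 \<noteq> 0" "K \<noteq> 0" using K by auto
  have "(N - (K + 1)) / (K + 1) = (N - K) / K - N / (K * (K + 1))"
    using K0 by (simp add: divide_simps) (simp add: algebra_simps)
  moreover have "(U - g) * a + g * (a - b) = U * a - g * b" for a b :: real
    by (simp add: algebra_simps)
  ultimately have "(U - g) * ((N - K) / K) + g * ((N - (K + 1)) / (K + 1))
               = U * ((N - K) / K) - g * (N / (K * (K + 1)))"
    by presburger
  also have "\<dots> \<le> U * ((N - K) / K) - ((K + 1) * (N - K) / 2) * (N / (K * (K + 1)))"
    using g K0 by (intro diff_left_mono mult_right_mono) auto
  also have "\<dots> \<le> U * (1 - 1 / N) * ((N - K) / K)"
  proof -
    have "((K + 1) * (N - K) / 2) * (N / (K * (K + 1))) = N * (N - K) / (2 * K)"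
      using K0 by (simp add: divide_simps)
    moreover have "U * ((N - K) / K) - U * (1 - 1 / N) * ((N - K) / K) = (2 * U) * (N - K) / (2 * K * N)"
      using K0 by (simp add: field_simps)
    moreover have "(2 * U) * (N - K) / (2 * K * N) = (N - 1) * (N - K) / (2 * K)"
      unfolding U using K0 by (simp add: field_simps)
    moreover have "(N - 1) * (N - K) / (2 * K) \<le> N * (N - K) / (2 * K)"
      using K0 K by (intro divide_right_mono mult_right_mono) auto
    ultimately show ?thesis by linarith
  qed
  finally show ?thesis .
qed

lemma sum_two_valued:
  fixes h :: "nat \<Rightarrow> real"
  assumes fin: "finite A" and vals: "\<And>x. x \<in> A \<Longrightarrow> f x = k \<or> f x = k + 1"
  shows "(\<Sum>x\<in>A. h (f x)) = (real (card A) - real (card {x \<in> A. f x = k + 1})) * h k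
                               + real (card {x \<in> A. f x = k + 1}) * h (k + 1)"
proof -
  let ?P = "{x \<in> A. f x = k + 1}"
  have PA: "?P \<subseteq> A" by auto
  have card_diff: "real (card (A - ?P)) = real (card A) - real (card ?P)"
    using fin PA card_mono[OF fin PA] card_Diff_subset[of ?P A] by (simp add: of_nat_diff finite_subset)
  have "(\<Sum>x\<in>A. h (f x)) = (\<Sum>x\<in>A - ?P. h (f x)) + (\<Sum>x\<in>?P. h (f x))"
    by (rule sum.subset_diff[OF PA fin])
  also have "\<dots> = (\<Sum>x\<in>A - ?P. h k) + (\<Sum>x\<in>?P. h (k + 1))"
    using vals by (intro arg_cong2[where f = "(+)"] sum.cong) auto
  also have "\<dots> = (real (card A) - real (card ?P)) * h k + real (card ?P) * h (k + 1)"
    using card_diff by simp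
  finally show ?thesis .
qed

lemma potential_drift:
  assumes I: "protocol_inv n l c" and n2: "2 \<le> n"
  shows "(\<Sum>x\<in>upairs n. potential n (num_settled n (interact_pair x c)))
           \<le> real (card (upairs n)) * (1 - 1 / real n) * potential n (num_settled n c)"
proof -
  define k where "k = num_settled n c"
  define P where "P = {x \<in> upairs n. num_settled n (interact_pair x c) = k + 1}"
  have k1: "1 \<le> k" using num_settled_pos[OF I] by (simp add: k_def)
  have next_k: "num_settled n (interact_pair x c) = k \<or> num_settled n (interact_pair x c) = k + 1"
    if "x \<in> upairs n" for x
    using protocol_inv_step[OF I step_interact_pair[OF that]] by (auto simp: k_def)
  show ?thesis
  proof (cases "k = n")
    case True
    then have "num_settled n (interact_pair x c) = n" if "x \<in> upairs n" for x
      using next_k[OF that] num_settled_le[of n "interact_pair x c"] by auto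
    then show ?thesis using True by (simp add: potential_def k_def)
  next
    case False
    then have kn: "k < n" using num_settled_le[of n c] by (simp add: k_def)
    have "(\<Sum>x\<in>upairs n. potential n (num_settled n (interact_pair x c)))
            = (real (card (upairs n)) - real (card P)) * potential n k + real (card P) * potential n (k + 1)"
      unfolding P_def
      by (rule sum_two_valued[where f = "\<lambda>x. num_settled n (interact_pair x c)", OF finite_upairs next_k])
    also have "\<dots> \<le> real (card (upairs n)) * (1 - 1 / real n) * potential n k"
    proof -
      have "real (2 * card (upairs n)) = real (n * (n - 1))" by (simp only: card_upairs)
      then have U: "2 * real (card (upairs n)) = real n * (real n - 1)" using n2 by (simp add: of_nat_diff)
      have "real ((k + 1) * (n - k)) \<le> real (2 * card P)"
        using card_progress_pairs[OF I] unfolding P_def k_def by linarith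
      moreover have "real ((k + 1) * (n - k)) = (real k + 1) * (real n - real k)"
        using kn by (simp only: of_nat_mult of_nat_add of_nat_1 of_nat_diff less_imp_le)
      ultimately have "(real k + 1) * (real n - real k) \<le> 2 * real (card P)" by simp
      then have "(real (card (upairs n)) - real (card P)) * ((real n - real k) / real k)
          + real (card P) * ((real n - (real k + 1)) / (real k + 1))
          \<le> real (card (upairs n)) * (1 - 1 / real n) * ((real n - real k) / real k)"
        by (rule potential_drift_real[OF U]) (use k1 kn in auto)
      then show ?thesis by (simp add: potential_def add.commute)
    qed
    finally show ?thesis by (simp add: k_def)
  qed
qed

lemma space_sched: "space (sched n) = UNIV"
  by (simp add: sched_def space_stream_space)

lemma prob_space_sched: "prob_space (sched n)"
  unfolding sched_def by (rule prob_space.prob_space_stream_space[OF prob_space_measure_pmf])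

lemma measurable_stake_sched:
  assumes "space M = UNIV"
  shows "(\<lambda>\<omega>. f (stake N \<omega>)) \<in> sched n \<rightarrow>\<^sub>M M"
proof -
  have "stake N \<in> sched n \<rightarrow>\<^sub>M count_space UNIV"
    unfolding sched_def
    by (subst measurable_cong_sets[OF sets_stream_space_cong[OF sets_measure_pmf_count_space] refl])
      (rule measurable_stake)
  then show ?thesis
    by (rule measurable_compose) (use assms in \<open>simp add: measurable_count_space_eq1\<close>)
qed

lemma sets_sched_stake: "{\<omega> \<in> space (sched n). P (stake N \<omega>)} \<in> sets (sched n)"
proof -
  have "(\<lambda>\<omega>. P (stake N \<omega>)) -` {True} \<inter> space (sched n) \<in> sets (sched n)"
    by (rule measurable_sets[OF measurable_stake_sched[where M = "count_space UNIV"]]) simp_all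
  moreover have "(\<lambda>\<omega>. P (stake N \<omega>)) -` {True} \<inter> space (sched n) = {\<omega> \<in> space (sched n). P (stake N \<omega>)}"
    by auto
  ultimately show ?thesis by simp
qed

lemma nn_integral_sched:
  assumes n2: "2 \<le> n" and f: "f \<in> borel_measurable (sched n)"
  shows "(\<integral>\<^sup>+\<omega>. f \<omega> \<partial>sched n)
           = (\<Sum>x\<in>upairs n. \<integral>\<^sup>+X. f (x ## X) \<partial>sched n) / of_nat (card (upairs n))"
proof -
  let ?p = "pmf_of_set (upairs n)"
  have "(\<integral>\<^sup>+\<omega>. f \<omega> \<partial>sched n) = (\<integral>\<^sup>+x. (\<integral>\<^sup>+X. f (x ## X) \<partial>sched n) \<partial>measure_pmf ?p)"
    using f unfolding sched_def
    by (rule prob_space.nn_integral_stream_space[OF prob_space_measure_pmf])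
  also have "\<dots> = (\<Sum>x\<in>upairs n. \<integral>\<^sup>+X. f (x ## X) \<partial>sched n) / of_nat (card (upairs n))"
    by (rule nn_integral_pmf_of_set[OF upairs_nonempty[OF n2] finite_upairs])
  finally show ?thesis .
qed

definition unfinished :: "nat \<Rightarrow> nat \<Rightarrow> config \<Rightarrow> (nat \<times> nat) stream \<Rightarrow> ennreal" where
  "unfinished n N c \<omega> =
     (if set (stake N \<omega>) \<subseteq> upairs n \<and> num_settled n (run c (stake N \<omega>)) < n then 1 else 0)"

lemma unfinished_Suc:
  "unfinished n (Suc N) c (x ## X) = (if x \<in> upairs n then unfinished n N (interact_pair x c) X else 0)"
  by (simp add: unfinished_def)

lemma one_le_potential: "1 \<le> k \<Longrightarrow> k < n \<Longrightarrow> 1 \<le> (real n - 1) * potential n k"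
proof -
  assume k: "1 \<le> k" "k < n"
  then have "real k * 1 \<le> (real n - 1) * (real n - real k)" by (intro mult_mono) auto
  then show ?thesis using k by (simp add: potential_def field_simps)
qed

lemma mean_ennreal:
  fixes g :: "'a \<Rightarrow> real"
  assumes "finite A" "A \<noteq> {}" "\<And>x. x \<in> A \<Longrightarrow> 0 \<le> g x"
  shows "(\<Sum>x\<in>A. ennreal (g x)) / of_nat (card A) = ennreal ((\<Sum>x\<in>A. g x) / real (card A))"
proof -
  have "(\<Sum>x\<in>A. ennreal (g x)) = ennreal (\<Sum>x\<in>A. g x)" using assms(3) by (rule sum_ennreal)
  moreover have "0 < real (card A)" using assms(1,2) by (simp add: card_gt_0_iff)
  ultimately show ?thesis
    using assms(3) by (simp add: ennreal_of_nat_eq_real_of_nat divide_ennreal sum_nonneg)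
qed

text \<open>The base case is Markov's inequality for the potential, which is at least \<open>1/(n - 1)\<close>
  while some node is unsettled; the step conditions on the first interaction.\<close>

lemma nn_integral_unfinished:
  assumes n2: "2 \<le> n"
  shows "protocol_inv n l c \<Longrightarrow> (\<integral>\<^sup>+\<omega>. unfinished n N c \<omega> \<partial>sched n)
           \<le> ennreal ((1 - 1 / real n) ^ N * (real n - 1) * potential n (num_settled n c))"
proof (induction N arbitrary: c)
  case 0
  interpret prob_space "sched n" by (rule prob_space_sched)
  have "(\<integral>\<^sup>+\<omega>. unfinished n 0 c \<omega> \<partial>sched n) = (if num_settled n c < n then 1 else 0)"
    by (simp add: unfinished_def emeasure_space_1)
  also have "\<dots> \<le> ennreal ((real n - 1) * potential n (num_settled n c))"
    using one_le_potential[OF num_settled_pos[OF "0.prems"]] by simp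
  finally show ?case by simp
next
  case (Suc N)
  let ?U = "upairs n" and ?B = "(1 - 1 / real n) ^ N * (real n - 1)"
  let ?\<psi> = "\<lambda>x. potential n (num_settled n (interact_pair x c))"
  have B0: "0 \<le> ?B" using n2 by simp
  have \<psi>0: "0 \<le> ?\<psi> x" for x using num_settled_le by (simp add: potential_def)
  have U0: "0 < real (card ?U)" using finite_upairs upairs_nonempty[OF n2] by (simp add: card_gt_0_iff)
  have meas: "unfinished n (Suc N) c \<in> borel_measurable (sched n)"
    unfolding unfinished_def[abs_def] by (rule measurable_stake_sched) simp
  have "(\<integral>\<^sup>+\<omega>. unfinished n (Suc N) c \<omega> \<partial>sched n)
          = (\<Sum>x\<in>?U. \<integral>\<^sup>+X. unfinished n N (interact_pair x c) X \<partial>sched n) / of_nat (card ?U)"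
    by (simp add: nn_integral_sched[OF n2 meas] unfinished_Suc)
  also have "\<dots> \<le> (\<Sum>x\<in>?U. ennreal (?B * ?\<psi> x)) / of_nat (card ?U)"
  proof (intro divide_right_mono_ennreal sum_mono)
    fix x assume "x \<in> ?U"
    then have "protocol_inv n l (interact_pair x c)" using Suc.prems protocol_inv_interact_pair by blast
    then show "(\<integral>\<^sup>+X. unfinished n N (interact_pair x c) X \<partial>sched n) \<le> ennreal (?B * ?\<psi> x)"
      using Suc.IH by (simp add: mult.assoc)
  qed
  also have "\<dots> = ennreal ((\<Sum>x\<in>?U. ?B * ?\<psi> x) / real (card ?U))"
    using B0 \<psi>0 by (intro mean_ennreal finite_upairs upairs_nonempty[OF n2]) simp
  also have "\<dots> \<le> ennreal ((1 - 1 / real n) ^ Suc N * (real n - 1) * potential n (num_settled n c))"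
  proof (rule ennreal_leI)
    have "(\<Sum>x\<in>?U. ?B * ?\<psi> x) / real (card ?U)
            \<le> ?B * (real (card ?U) * (1 - 1 / real n) * potential n (num_settled n c)) / real (card ?U)"
      unfolding sum_distrib_left[symmetric] using potential_drift[OF Suc.prems n2] B0 U0
      by (intro divide_right_mono mult_left_mono) auto
    also have "\<dots> = (1 - 1 / real n) ^ Suc N * (real n - 1) * potential n (num_settled n c)"
      using U0 by (simp add: field_simps)
    finally show "(\<Sum>x\<in>?U. ?B * ?\<psi> x) / real (card ?U)
                    \<le> (1 - 1 / real n) ^ Suc N * (real n - 1) * potential n (num_settled n c)" .
  qed
  finally show ?case .
qed

lemma geometric_tail_le_powr:
  fixes a :: real
  assumes n2: "2 \<le> n" and a: "a > 0" and N: "(a + 2) * real n * ln (real n) \<le> real N"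
  shows "(1 - 1 / real n) ^ N * (real n - 1) * (real n - 1) \<le> real n powr (- a)"
proof -
  have n0: "real n > 0" using n2 by simp
  have "(1 - 1 / real n) ^ N \<le> exp (- 1 / real n) ^ N"
    using exp_ge_add_one_self[of "- 1 / real n"] n2 by (intro power_mono) (auto simp: field_simps)
  also have "\<dots> = exp (real N * (- 1 / real n))" by (rule exp_of_nat_mult[symmetric])
  also have "\<dots> \<le> exp (- (a + 2) * ln (real n))"
    using N n0 by (simp add: field_simps)
  also have "\<dots> = real n powr (- (a + 2))" using n0 by (simp add: powr_def)
  finally have "(1 - 1 / real n) ^ N \<le> real n powr (- (a + 2))" .
  moreover have "(real n - 1) * (real n - 1) \<le> real n powr 2"
    using n2 by (simp add: powr_numeral power2_eq_square mult_mono)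
  ultimately have "(1 - 1 / real n) ^ N * ((real n - 1) * (real n - 1)) \<le> real n powr (- (a + 2)) * real n powr 2"
    using n2 by (intro mult_mono) auto
  also have "\<dots> = real n powr (- (a + 2) + 2)" by (rule powr_add[symmetric])
  finally show ?thesis by (simp add: mult.assoc)
qed

lemma sets_stabilised_event:
  "{\<omega> \<in> space (sched n). \<exists>G. treeT n G \<and> (\<forall>t::nat. x \<le> real t \<longrightarrow> iso n (snd (config_at l \<omega> t)) G)}
     \<in> sets (sched n)"
proof -
  let ?GS = "{G. G \<subseteq> pairs n \<and> treeT n G}" and ?T = "{t::nat. x \<le> real t}"
  have "{\<omega> \<in> space (sched n). \<exists>G. treeT n G \<and> (\<forall>t::nat. x \<le> real t \<longrightarrow> iso n (snd (config_at l \<omega> t)) G)}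
          = (\<Union>G\<in>?GS. \<Inter>t\<in>?T. {\<omega> \<in> space (sched n). iso n (snd (run (init l) (stake t \<omega>))) G})"
    unfolding config_at_eq_run using space_sched by (auto simp: treeT_def is_tree_def)
  moreover have "countable ?GS"
  proof -
    have "pairs n \<subseteq> (\<lambda>(u, v). {u, v}) ` ({..<n} \<times> {..<n})" by (auto simp: pairs_def)
    then have "finite (Pow (pairs n))" by (simp add: finite_subset)
    moreover have "?GS \<subseteq> Pow (pairs n)" by blast
    ultimately show ?thesis by (meson countable_finite finite_subset)
  qed
  moreover have "(\<Inter>t\<in>?T. {\<omega> \<in> space (sched n). iso n (snd (run (init l) (stake t \<omega>))) G}) \<in> sets (sched n)"
    for G
  proof (rule sets.countable_INT')
    show "?T \<noteq> {}" using real_nat_ceiling_ge[of x] by blast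
  qed (auto intro: sets_sched_stake)
  ultimately show ?thesis by (auto intro: sets.countable_UN')
qed

lemma AE_sched_upairs:
  assumes "2 \<le> n"
  shows "AE \<omega> in sched n. \<forall>i. \<omega> !! i \<in> upairs n"
proof -
  let ?p = "pmf_of_set (upairs n)"
  have "AE \<omega> in sched n. stream_all (\<lambda>y. y \<in> upairs n) \<omega>"
    unfolding sched_def
  proof (rule prob_space.AE_stream_all[OF prob_space_measure_pmf])
    show "Measurable.pred (measure_pmf ?p) (\<lambda>y. y \<in> upairs n)" by (simp add: pred_def)
    show "AE y in measure_pmf ?p. y \<in> upairs n"
      using AE_measure_pmf[of ?p] set_pmf_of_set[OF upairs_nonempty[OF assms] finite_upairs] by simp
  qed
  then show ?thesis unfolding stream_all_def .
qed

lemma set_stake_subset: "\<forall>i. s !! i \<in> A \<Longrightarrow> set (stake m s) \<subseteq> A"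
  by (auto simp: in_set_conv_nth)

lemma settled_stabilises:
  assumes l: "l < n" and \<omega>: "\<forall>i. \<omega> !! i \<in> upairs n"
    and settled: "num_settled n (run (init l) (stake N \<omega>)) = n"
  shows "treeT n (snd (config_at l \<omega> N)) \<and> (\<forall>t\<ge>N. config_at l \<omega> t = config_at l \<omega> N)"
proof -
  let ?c = "run (init l) (stake N \<omega>)"
  have I: "protocol_inv n l ?c" using protocol_inv_run[OF set_stake_subset[OF \<omega>] protocol_inv_init[OF l]] .
  have all: "\<forall>i<n. fst ?c i \<noteq> F" using settled num_settled_eq_iff by blast
  have "config_at l \<omega> t = ?c" if "N \<le> t" for t
  proof -
    have split: "stake t \<omega> = stake N \<omega> @ stake (t - N) (sdrop N \<omega>)"
      using that by (metis stake_add le_add_diff_inverse)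
    have "set (stake (t - N) (sdrop N \<omega>)) \<subseteq> upairs n"
      using \<omega> by (intro set_stake_subset) (simp add: sdrop_snth)
    then have "run ?c (stake (t - N) (sdrop N \<omega>)) = ?c" using run_all_settled all by blast
    then show ?thesis by (simp only: config_at_eq_run split run_simps(3))
  qed
  then show ?thesis using protocol_inv_all_settled_treeT[OF I all] by simp
qed

lemma prob_unsettled_le:
  fixes a :: real
  assumes a: "a > 0" and n2: "2 \<le> n" and l: "l < n" and N: "(a + 2) * real n * ln (real n) \<le> real N"
  shows "measure (sched n) {\<omega> \<in> space (sched n). set (stake N \<omega>) \<subseteq> upairs n \<and>
           num_settled n (run (init l) (stake N \<omega>)) < n} \<le> real n powr (- a)"
    (is "measure _ ?B \<le> _")
proof -
  interpret prob_space "sched n" by (rule prob_space_sched)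
  have "ennreal (prob ?B) = emeasure (sched n) ?B" by (simp add: emeasure_eq_measure)
  also have "\<dots> = (\<integral>\<^sup>+\<omega>. indicator ?B \<omega> \<partial>sched n)" using sets_sched_stake by simp
  also have "\<dots> = (\<integral>\<^sup>+\<omega>. unfinished n N (init l) \<omega> \<partial>sched n)"
    by (intro nn_integral_cong) (simp add: unfinished_def indicator_def space_sched)
  also have "\<dots> \<le> ennreal ((1 - 1 / real n) ^ N * (real n - 1) * (real n - 1))"
    using nn_integral_unfinished[OF n2 protocol_inv_init[OF l]]
    by (simp add: num_settled_init[OF l] potential_def)
  finally have "prob ?B \<le> (1 - 1 / real n) ^ N * (real n - 1) * (real n - 1)"
    using n2 by (subst (asm) ennreal_le_iff) auto
  also have "\<dots> \<le> real n powr (- a)" by (rule geometric_tail_le_powr[OF n2 a N])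
  finally show ?thesis .
qed

lemma stabilises_whp:
  fixes a :: real
  assumes a: "a > 0" and n2: "2 \<le> n" and l: "l < n"
  shows "measure (sched n) {\<omega> \<in> space (sched n). \<exists>G. treeT n G \<and>
           (\<forall>t::nat. real t \<ge> (a + 2) * real n * ln (real n) \<longrightarrow> iso n (snd (config_at l \<omega> t)) G)}
         \<ge> 1 - real n powr (- a)"
    (is "measure _ ?S \<ge> _")
proof -
  interpret prob_space "sched n" by (rule prob_space_sched)
  define x where "x = (a + 2) * real n * ln (real n)"
  define N where "N = nat \<lceil>x\<rceil>"
  define B where "B = {\<omega> \<in> space (sched n). set (stake N \<omega>) \<subseteq> upairs n \<and>
                         num_settled n (run (init l) (stake N \<omega>)) < n}"
  have xN: "x \<le> real N" unfolding N_def by (rule real_nat_ceiling_ge)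
  have B_sets: "B \<in> sets (sched n)" unfolding B_def by (rule sets_sched_stake)
  have "AE \<omega> in sched n. \<omega> \<in> space (sched n) - ?S \<longrightarrow> \<omega> \<in> B"
    using AE_sched_upairs[OF n2]
  proof (rule eventually_mono, intro impI)
    fix \<omega> assume \<omega>: "\<forall>i. \<omega> !! i \<in> upairs n" and not_S: "\<omega> \<in> space (sched n) - ?S"
    show "\<omega> \<in> B"
    proof (rule ccontr)
      assume "\<omega> \<notin> B"
      then have "num_settled n (run (init l) (stake N \<omega>)) = n"
        using set_stake_subset[OF \<omega>] num_settled_le[of n "run (init l) (stake N \<omega>)"] space_sched
        by (auto simp: B_def)
      then have tree: "treeT n (snd (config_at l \<omega> N))"
        and const: "\<forall>t\<ge>N. config_at l \<omega> t = config_at l \<omega> N"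
        using settled_stabilises[OF l \<omega>] by blast+
      have "iso n (snd (config_at l \<omega> t)) (snd (config_at l \<omega> N))"
        if "(a + 2) * real n * ln (real n) \<le> real t" for t
      proof -
        have "N \<le> t" using that by (simp add: N_def x_def)
        then have "config_at l \<omega> t = config_at l \<omega> N" using const by blast
        then show ?thesis by (simp add: iso_refl)
      qed
      then have "\<omega> \<in> ?S" using tree space_sched by blast
      then show False using not_S by blast
    qed
  qed
  then have "prob (space (sched n) - ?S) \<le> prob B"
    using B_sets by (rule finite_measure_mono_AE)
  also have "\<dots> \<le> real n powr (- a)" unfolding B_def by (rule prob_unsettled_le[OF a n2 l xN[unfolded x_def]])
  finally show ?thesis using prob_compl[OF sets_stabilised_event] by (simp add: x_def)
qed

theorem theorem1:
  shows "(\<forall>n l. 2 \<le> n \<and> l < n \<longrightarrow> stably_constructs n l (treeT n)) \<and>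
         (\<forall>a::real. a > 0 \<longrightarrow> (\<exists>c::real. c > 0 \<and>
            (\<forall>n l. 2 \<le> n \<and> l < n \<longrightarrow>
               measure (sched n)
                 {\<omega> \<in> space (sched n). \<exists>G. treeT n G \<and>
                     (\<forall>t::nat. real t \<ge> c * real n * ln (real n) \<longrightarrow>
                        iso n (snd (config_at l \<omega> t)) G)}
               \<ge> 1 - real n powr (- a))))"
proof (intro conjI allI impI)
  fix n l :: nat
  assume "2 \<le> n \<and> l < n"
  then show "stably_constructs n l (treeT n)" using protocol_stably_constructs_treeT by blast
next
  fix a :: real
  assume "a > 0"
  then show "\<exists>c>0. \<forall>n l. 2 \<le> n \<and> l < n \<longrightarrow>
               measure (sched n)
                 {\<omega> \<in> space (sched n). \<exists>G. treeT n G \<and>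
                     (\<forall>t::nat. real t \<ge> c * real n * ln (real n) \<longrightarrow>
                        iso n (snd (config_at l \<omega> t)) G)}
               \<ge> 1 - real n powr (- a)"
    using stabilises_whp by (intro exI[of _ "a + 2"]) auto
qed

end
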